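(* Consider the online energy harvesting two-hop status update system described in the context, with service times $d>0$ and $\bar d>0$. Under any feasible policy, the number $N(T)$ of updates received by the destination within time $T$ satisfies $$\limsup_{T\to\infty}\frac{N(T)}{T}\le \min\left\{1,\frac{1}{d+\bar d}\right\}\quad\text{almost surely}.$$
   Context: A source sends status updates to a destination through a half-duplex relay. Energy arrives at the source and at the relay according to two independent Poisson processes of unit rate. Each node has an infinite battery, and at time $0$ each battery holds exactly one energy packet. Transmitting one update consumes one energy packet at the transmitting node, and a node may transmit only if its battery holds at least one packet just before the transmission time (energy causality). An update transmitted by the source at time $t_i$ reaches the relay at time $t_i+d$. The relay forwards it at a time $\bar t_i\ge t_i+d$, and it reaches the destination at time $\bar t_i+\bar d$. The source may transmit the next update only at a time $t_{i+1}\ge\bar t_i+\bar d$. A feasible policy is any choice of such transmission times satisfying these constraints. $N(T)$ is the number of indices $i$ with $\bar t_i+\bar d\le T$. *)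

theory Defs
  imports "HOL-Probability.Probability"
begin

text \<open>Energy arrivals at a node form a unit-rate Poisson process, described by its
  interarrival times X 0, X 1, ...: the k-th arrival (k >= 1) occurs at time
  X 0 + ... + X (k-1).\<close>
definition arrivals_before :: "(nat \<Rightarrow> 'a \<Rightarrow> real) \<Rightarrow> 'a \<Rightarrow> real \<Rightarrow> nat" where
  "arrivals_before X \<omega> t = card {k::nat. 1 \<le> k \<and> (\<Sum>j<k. X j \<omega>) < t}"

text \<open>Feasibility of a (possibly finite) schedule with K updates (K = \<infinity> allowed):
  source transmission times ts i, relay transmission times tr i, for indices i < K.
  Each battery holds one packet at time 0; the i-th transmission (counting from 0)
  needs i+1 packets harvested (including the initial one) just before it.\<close>
definition feasible ::
  "real \<Rightarrow> real \<Rightarrow> (nat \<Rightarrow> 'a \<Rightarrow> real) \<Rightarrow> (nat \<Rightarrow> 'a \<Rightarrow> real) \<Rightarrow> 'a \<Rightarrow>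
   enat \<Rightarrow> (nat \<Rightarrow> real) \<Rightarrow> (nat \<Rightarrow> real) \<Rightarrow> bool" where
  "feasible d db X Y \<omega> K ts tr \<longleftrightarrow>
     (0 < K \<longrightarrow> 0 \<le> ts 0) \<and>
     (\<forall>i. enat i < K \<longrightarrow>
        ts i + d \<le> tr i \<and>
        i + 1 \<le> 1 + arrivals_before X \<omega> (ts i) \<and>
        i + 1 \<le> 1 + arrivals_before Y \<omega> (tr i)) \<and>
     (\<forall>i. enat (Suc i) < K \<longrightarrow> tr i + db \<le> ts (Suc i))"

definition delivered :: "real \<Rightarrow> enat \<Rightarrow> (nat \<Rightarrow> real) \<Rightarrow> real \<Rightarrow> nat" where
  "delivered db K tr T = card {i::nat. enat i < K \<and> tr i + db \<le> T}"

end

(* Energy causality at the source means that the i-th update cannot be sent before i packets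
   have been harvested, so at most one more update than there are source energy arrivals
   before T can be delivered by time T.  Every update occupies both hops, so consecutive
   source transmissions are at least d + db apart and N(T) <= T / (d + db).  It remains to
   see that the source energy arrivals have rate at most 1: the k-th arrival time S_k is
   Erlang distributed, and a Chernoff bound gives P(S_k <= c k) <= (c exp (1 - c))^k, which
   is summable for c < 1, so by Borel-Cantelli almost surely S_k > c k eventually, for every
   c < 1 simultaneously. *)
theory Submission
  imports Defs "HOL-Real_Asymp.Real_Asymp"
begin

lemma Limsup_ereal_leI:
  assumes "\<And>r. L < r \<Longrightarrow> eventually (\<lambda>x. f x < r) F"
  shows "Limsup F (\<lambda>x. ereal (f x)) \<le> ereal L"
  unfolding Limsup_le_iff
proof (intro allI impI)
  fix y :: ereal assume "ereal L < y"
  then show "eventually (\<lambda>x. ereal (f x) < y) F"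
    by (cases y) (auto intro: assms)
qed

lemma (in prob_space) indep_sets_reindex:
  assumes "indep_sets G I" "inj_on f J" "f ` J \<subseteq> I"
  shows "indep_sets (\<lambda>j. G (f j)) J"
  unfolding indep_sets_def
proof (intro conjI ballI allI impI)
  fix j assume "j \<in> J"
  then show "G (f j) \<subseteq> events" using assms unfolding indep_sets_def by blast
next
  fix K A
  assume K: "K \<subseteq> J" "K \<noteq> {}" "finite K" and A: "A \<in> Pi K (\<lambda>j. G (f j))"
  define A' where "A' = (\<lambda>i. A (the_inv_into K f i))"
  have inj: "inj_on f K" using assms(2) K(1) by (rule inj_on_subset)
  have A'_f: "A' (f k) = A k" if "k \<in> K" for k
    using the_inv_into_f_f[OF inj that] by (simp add: A'_def)
  have "A' \<in> Pi (f ` K) G" using A A'_f by auto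
  then have "prob (\<Inter>i\<in>f ` K. A' i) = (\<Prod>i\<in>f ` K. prob (A' i))"
    using assms(1,3) K unfolding indep_sets_def
    by (metis image_is_empty image_mono finite_imageI order_trans)
  then show "prob (\<Inter>j\<in>K. A j) = (\<Prod>j\<in>K. prob (A j))"
    by (simp add: prod.reindex[OF inj] A'_f)
qed

lemma (in prob_space) indep_vars_reindex:
  assumes "indep_vars M' Z I" "inj_on f J" "f ` J \<subseteq> I"
  shows "indep_vars (\<lambda>j. M' (f j)) (\<lambda>j. Z (f j)) J"
  using assms indep_sets_reindex[of "\<lambda>i. {Z i -` A \<inter> space M | A. A \<in> sets (M' i)}" I f J]
  unfolding indep_vars_def2 by auto

lemma erlang_CDF_Chernoff_bound:
  fixes a lam :: real
  assumes a: "0 \<le> a" and lam: "1 \<le> lam"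
  shows "erlang_CDF n 1 a \<le> exp (-a) * exp (lam * a) / lam ^ Suc n"
proof -
  define t where "t = (\<lambda>(x::real) i. x ^ i / fact i)"
  have tail: "(\<lambda>i. t x (i + Suc n)) sums (exp x - sum (t x) {..<Suc n})" for x
    using sums_iff_shift'[of "t x" "Suc n" "exp x"] exp_converges[of x]
    by (simp add: t_def divide_inverse mult.commute)
  have "erlang_CDF n 1 a = exp (-a) * (exp a - sum (t a) {..<Suc n})"
    using a unfolding erlang_CDF_def t_def
    by (simp add: lessThan_Suc_atMost sum_distrib_left right_diff_distrib exp_minus field_simps)
  also have "exp a - sum (t a) {..<Suc n} = (\<Sum>i. t a (i + Suc n))"
    using tail[of a] by (simp add: sums_iff)
  also have "\<dots> \<le> (\<Sum>i. t (lam * a) (i + Suc n) / lam ^ Suc n)"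
  proof (rule suminf_le)
    fix i
    have "a ^ (i + Suc n) \<le> lam ^ i * a ^ (i + Suc n)"
      using mult_right_mono[OF one_le_power[OF lam, of i] zero_le_power[OF a, of "i + Suc n"]] by simp
    also have "\<dots> = (lam * a) ^ (i + Suc n) / lam ^ Suc n"
      using lam by (simp add: power_add field_simps)
    finally have "a ^ (i + Suc n) / fact (i + Suc n)
        \<le> (lam * a) ^ (i + Suc n) / lam ^ Suc n / fact (i + Suc n)"
      by (rule divide_right_mono) simp
    then show "t a (i + Suc n) \<le> t (lam * a) (i + Suc n) / lam ^ Suc n"
      by (simp only: t_def divide_divide_eq_left mult.commute)
  qed (use tail in \<open>auto simp: sums_iff intro: summable_divide\<close>)
  also have "\<dots> = (exp (lam * a) - sum (t (lam * a)) {..<Suc n}) / lam ^ Suc n"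
    using sums_divide[OF tail[of "lam * a"]] by (simp add: sums_iff)
  also have "\<dots> \<le> exp (lam * a) / lam ^ Suc n"
  proof -
    have "0 \<le> sum (t (lam * a)) {..<Suc n}"
      using a lam unfolding t_def by (intro sum_nonneg) simp
    then show ?thesis using lam by (intro divide_right_mono) auto
  qed
  finally show ?thesis
    by (simp add: mult_left_mono)
qed

lemma mult_exp_one_minus_lt_one:
  fixes c :: real
  assumes "0 < c" "c < 1"
  shows "c * exp (1 - c) < 1"
proof -
  have "ln c < c - 1"
    using ln_le_minus_one[of c] ln_eq_minus_one[of c] assms by force
  then have "exp (ln c + (1 - c)) < exp 0" by simp
  then show ?thesis using assms by (simp add: exp_add)
qed

lemma (in prob_space) AE_eventually_partial_sums_gt:
  assumes indep: "indep_vars (\<lambda>_. borel) X UNIV"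
    and expX: "\<And>k. distributed M lborel (X k) (exponential_density 1)"
    and c: "0 < c" "c < 1"
  shows "AE \<omega> in M. eventually (\<lambda>k. c * real k < (\<Sum>j<k. X j \<omega>)) sequentially"
proof -
  define r where "r = c * exp (1 - c)"
  have r: "0 < r" "r < 1" using mult_exp_one_minus_lt_one[OF c] c by (auto simp: r_def)
  have [measurable]: "X j \<in> borel_measurable M" for j
    using distributed_measurable[OF expX[of j]] by simp
  define A where "A n = {\<omega> \<in> space M. (\<Sum>j<Suc n. X j \<omega>) \<le> c * real (Suc n)}" for n
  have [measurable]: "A n \<in> events" for n unfolding A_def by measurable
  have erlang: "distributed M lborel (\<lambda>\<omega>. \<Sum>j<Suc n. X j \<omega>) (erlang_density n 1)" for n
    using exponential_distributed_sum[of "{..<Suc n}" 1 X, OF _ _ _ expX indep_vars_subset[OF indep]]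
    by (simp add: lessThan_empty_iff)
  have tail_bound: "prob (A n) \<le> r ^ Suc n" for n
  proof -
    have "prob (A n) = erlang_CDF n 1 (c * real (Suc n))"
      unfolding A_def using erlang_distributed_le[OF erlang, of "c * real (Suc n)"] c by simp
    also have "\<dots> \<le> exp (- (c * real (Suc n))) * exp (1 / c * (c * real (Suc n))) / (1 / c) ^ Suc n"
      using c by (intro erlang_CDF_Chernoff_bound) auto
    also have "\<dots> = r ^ Suc n"
      using c by (simp add: r_def power_one_over exp_of_nat_mult[symmetric]
          exp_add[symmetric] algebra_simps)
    finally show ?thesis .
  qed
  have "summable (\<lambda>n. r ^ Suc n)"
    using r by (simp add: summable_Suc_iff summable_geometric)
  then have "summable (\<lambda>n. prob (A n))"
    by (rule summable_comparison_test') (simp del: power_Suc add: tail_bound)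
  then have "AE \<omega> in M. eventually (\<lambda>n. \<omega> \<in> space M - A n) sequentially"
    by (intro borel_cantelli_AE1) (auto simp: emeasure_eq_measure)
  then show ?thesis
    by (rule AE_mp) (auto elim!: eventually_mono simp: A_def
        eventually_sequentially_Suc[symmetric, of "\<lambda>k. c * real k < (\<Sum>j<k. X j _)"])
qed

lemma (in prob_space) AE_all_eventually_partial_sums_gt:
  assumes "indep_vars (\<lambda>_. borel) X UNIV"
    and "\<And>k. distributed M lborel (X k) (exponential_density 1)"
  shows "AE \<omega> in M. \<forall>c<1. eventually (\<lambda>k. c * real k < (\<Sum>j<k. X j \<omega>)) sequentially"
proof -
  define c where "c m = 1 - 1 / real (Suc (Suc m))" for m
  have "AE \<omega> in M. \<forall>m. eventually (\<lambda>k. c m * real k < (\<Sum>j<k. X j \<omega>)) sequentially"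
    using AE_eventually_partial_sums_gt[OF assms] by (simp add: AE_all_countable c_def)
  then show ?thesis
  proof (rule AE_mp, intro AE_I2 impI allI)
    fix \<omega> and b :: real
    assume all: "\<forall>m. eventually (\<lambda>k. c m * real k < (\<Sum>j<k. X j \<omega>)) sequentially" and "b < 1"
    then obtain m where "inverse (real (Suc m)) < 1 - b"
      using reals_Archimedean[of "1 - b"] by auto
    moreover have "1 / real (Suc (Suc m)) \<le> 1 / real (Suc m)"
      by (intro divide_left_mono) auto
    ultimately have "b \<le> c m"
      by (simp add: c_def inverse_eq_divide)
    then have scale: "b * real k \<le> c m * real k" for k
      by (simp add: mult_right_mono)
    show "eventually (\<lambda>k. b * real k < (\<Sum>j<k. X j \<omega>)) sequentially"
      using all[rule_format, of m] by (rule eventually_mono) (meson scale le_less_trans)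
  qed
qed

lemma feasible_source_time_ge:
  assumes f: "feasible d db X Y \<omega> K ts tr"
  shows "enat i < K \<Longrightarrow> real i * (d + db) \<le> ts i"
proof (induction i)
  case 0
  then show ?case using f by (auto simp: feasible_def zero_enat_def[symmetric])
next
  case (Suc i)
  then have iK: "enat i < K" by (metis Suc_ile_eq less_imp_le)
  have "ts i + d \<le> tr i" "tr i + db \<le> ts (Suc i)"
    using f iK Suc.prems by (auto simp: feasible_def)
  with Suc.IH[OF iK] show ?case by (simp add: algebra_simps)
qed

lemma delivered_le_time_div:
  assumes f: "feasible d db X Y \<omega> K ts tr" and "0 < d + db" and "0 \<le> T"
  shows "real (delivered db K tr T) \<le> T / (d + db)"
proof -
  let ?n = "nat \<lfloor>T / (d + db)\<rfloor>"
  have "{i. enat i < K \<and> tr i + db \<le> T} \<subseteq> {..<?n}"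
  proof
    fix i assume i: "i \<in> {i. enat i < K \<and> tr i + db \<le> T}"
    then have "real (Suc i) * (d + db) \<le> T"
      using feasible_source_time_ge[OF f, of i] f by (auto simp: feasible_def algebra_simps)
    then have "real (Suc i) \<le> T / (d + db)"
      using \<open>0 < d + db\<close> by (simp add: field_simps)
    then have "int (Suc i) \<le> \<lfloor>T / (d + db)\<rfloor>"
      by (metis le_floor_iff of_int_of_nat_eq)
    then show "i \<in> {..<?n}" by auto
  qed
  then have "delivered db K tr T \<le> ?n"
    unfolding delivered_def by (metis card_lessThan card_mono finite_lessThan)
  moreover have "real ?n \<le> T / (d + db)"
    using assms(2,3) by (simp add: of_nat_floor)
  ultimately show ?thesis by linarith
qed

lemma arrivals_before_mono:
  assumes "finite {k. 1 \<le> k \<and> (\<Sum>j<k. X j \<omega>) < t'}" and "t \<le> t'"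
  shows "arrivals_before X \<omega> t \<le> arrivals_before X \<omega> t'"
  unfolding arrivals_before_def using assms by (intro card_mono) auto

lemma delivered_le_Suc_arrivals_before:
  assumes f: "feasible d db X Y \<omega> K ts tr" and "0 \<le> d" "0 \<le> db"
    and fin: "finite {k. 1 \<le> k \<and> (\<Sum>j<k. X j \<omega>) < T}"
  shows "delivered db K tr T \<le> Suc (arrivals_before X \<omega> T)"
proof -
  have "{i. enat i < K \<and> tr i + db \<le> T} \<subseteq> {..arrivals_before X \<omega> T}"
  proof
    fix i assume "i \<in> {i. enat i < K \<and> tr i + db \<le> T}"
    then have "i \<le> arrivals_before X \<omega> (ts i)" "ts i \<le> T"
      using f assms(2,3) by (auto simp: feasible_def)
    then show "i \<in> {..arrivals_before X \<omega> T}"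
      using arrivals_before_mono[of X \<omega> T "ts i", OF fin] by fastforce
  qed
  then show ?thesis
    unfolding delivered_def by (metis card_atMost card_mono finite_atMost)
qed

lemma arrivals_before_le_linear:
  assumes "0 < c" and lower: "\<forall>k\<ge>k0. c * real k < (\<Sum>j<k. X j \<omega>)" and "0 \<le> t"
  shows "finite {k. 1 \<le> k \<and> (\<Sum>j<k. X j \<omega>) < t}"
    and "real (arrivals_before X \<omega> t) \<le> real k0 + t / c"
proof -
  let ?n = "nat \<lfloor>t / c\<rfloor>"
  have sub: "{k. 1 \<le> k \<and> (\<Sum>j<k. X j \<omega>) < t} \<subseteq> {1..<k0} \<union> {1..?n}"
  proof
    fix k assume k: "k \<in> {k. 1 \<le> k \<and> (\<Sum>j<k. X j \<omega>) < t}"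
    show "k \<in> {1..<k0} \<union> {1..?n}"
    proof (cases "k < k0")
      case False
      then have "c * real k < (\<Sum>j<k. X j \<omega>)" using lower by simp
      then have "c * real k < t" using k by simp
      then have "real k \<le> t / c" using \<open>0 < c\<close> by (simp add: field_simps)
      then have "int k \<le> \<lfloor>t / c\<rfloor>"
        by (metis le_floor_iff of_int_of_nat_eq)
      then show ?thesis using k by auto
    qed (use k in auto)
  qed
  then show "finite {k. 1 \<le> k \<and> (\<Sum>j<k. X j \<omega>) < t}"
    by (rule finite_subset) simp
  have "arrivals_before X \<omega> t \<le> card ({1..<k0} \<union> {1..?n})"
    unfolding arrivals_before_def using sub by (intro card_mono) auto
  also have "\<dots> \<le> k0 + ?n"
    using card_Un_le[of "{1..<k0}" "{1..?n}"] by simp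
  finally have "real (arrivals_before X \<omega> t) \<le> real k0 + real ?n" by simp
  moreover have "real ?n \<le> t / c"
    using assms(1,3) by (simp add: of_nat_floor)
  ultimately show "real (arrivals_before X \<omega> t) \<le> real k0 + t / c" by linarith
qed

lemma Limsup_delivered_rate_le_service:
  assumes f: "feasible d db X Y \<omega> K ts tr" and "0 < d + db"
  shows "Limsup at_top (\<lambda>T. ereal (real (delivered db K tr T) / T)) \<le> ereal (1 / (d + db))"
proof (rule Limsup_bounded)
  have rate: "real (delivered db K tr T) / T \<le> 1 / (d + db)" if "0 < T" for T
    using delivered_le_time_div[OF f \<open>0 < d + db\<close>, of T] that by (simp add: field_simps)
  show "\<forall>\<^sub>F T in at_top. ereal (real (delivered db K tr T) / T) \<le> ereal (1 / (d + db))"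
    using eventually_gt_at_top[of "0::real"] by (rule eventually_mono) (simp add: rate)
qed

lemma Limsup_delivered_rate_le_one:
  assumes f: "feasible d db X Y \<omega> K ts tr" and "0 \<le> d" "0 \<le> db"
    and lower: "\<And>c. c < 1 \<Longrightarrow> eventually (\<lambda>k. c * real k < (\<Sum>j<k. X j \<omega>)) sequentially"
  shows "Limsup at_top (\<lambda>T. ereal (real (delivered db K tr T) / T)) \<le> ereal 1"
proof (rule Limsup_ereal_leI)
  fix r :: real assume "1 < r"
  define c where "c = 2 / (1 + r)"
  have c: "0 < c" "c < 1" "1 / c < r" using \<open>1 < r\<close> by (auto simp: c_def field_simps)
  obtain k0 where k0: "\<forall>k\<ge>k0. c * real k < (\<Sum>j<k. X j \<omega>)"
    using lower[OF c(2)] unfolding eventually_sequentially by blast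
  have "((\<lambda>T. (1 + real k0 + T / c) / T) \<longlongrightarrow> 1 / c) at_top"
    using c(1) by (real_asymp simp: inverse_eq_divide)
  then have bound_lt: "\<forall>\<^sub>F T in at_top. (1 + real k0 + T / c) / T < r"
    using c(3) by (rule order_tendstoD)
  have rate_le: "real (delivered db K tr T) / T \<le> (1 + real k0 + T / c) / T" if "0 < T" for T
  proof -
    have "0 \<le> T" using that by simp
    note arrivals = arrivals_before_le_linear[where X = X and \<omega> = \<omega>, OF c(1) k0 this]
    have "delivered db K tr T \<le> Suc (arrivals_before X \<omega> T)"
      by (rule delivered_le_Suc_arrivals_before[OF f assms(2,3) arrivals(1)])
    then have "real (delivered db K tr T) \<le> 1 + real k0 + T / c"
      using arrivals(2) by linarith
    then show ?thesis using that by (simp add: divide_right_mono)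
  qed
  show "\<forall>\<^sub>F T in at_top. real (delivered db K tr T) / T < r"
    using bound_lt eventually_gt_at_top[of "0::real"]
    by eventually_elim (meson le_less_trans rate_le)
qed

theorem lemma6:
  fixes M :: "'a measure" and X Y :: "nat \<Rightarrow> 'a \<Rightarrow> real"
    and d db :: real
    and K :: "'a \<Rightarrow> enat" and ts tr :: "'a \<Rightarrow> nat \<Rightarrow> real"
  assumes "prob_space M"
    and indep: "prob_space.indep_vars M (\<lambda>_. borel)
                  (\<lambda>(b, k). if b then X k else Y k) (UNIV :: (bool \<times> nat) set)"
    and expX: "\<And>k. distributed M lborel (X k) (exponential_density 1)"
    and expY: "\<And>k. distributed M lborel (Y k) (exponential_density 1)"
    and "d > 0" and "db > 0"
    and feas: "AE \<omega> in M. feasible d db X Y \<omega> (K \<omega>) (ts \<omega>) (tr \<omega>)"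
  shows "AE \<omega> in M.
           Limsup at_top (\<lambda>T::real. ereal (real (delivered db (K \<omega>) (tr \<omega>) T) / T))
             \<le> ereal (min 1 (1 / (d + db)))"
proof -
  interpret prob_space M by fact
  have "indep_vars (\<lambda>_. borel) X UNIV"
    using indep_vars_reindex[OF indep, of "Pair True" UNIV] by (simp add: inj_def)
  then have "AE \<omega> in M. \<forall>c<1. eventually (\<lambda>k. c * real k < (\<Sum>j<k. X j \<omega>)) sequentially"
    using expX by (rule AE_all_eventually_partial_sums_gt)
  with feas show ?thesis
  proof eventually_elim
    case (elim \<omega>)
    have "0 \<le> d" "0 \<le> db" "0 < d + db" using \<open>d > 0\<close> \<open>db > 0\<close> by auto
    then show ?case
      using Limsup_delivered_rate_le_one[OF elim(1) _ _ elim(2)[rule_format]]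
        Limsup_delivered_rate_le_service[OF elim(1)]
      by (simp add: min_def)
  qed
qed

end
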